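(* For every $n\ge1$, the affine curvatures of the inflection-point polygon $r_1,\dots,r_{N(n)}$ of the Hilbert curve $H_n$ satisfy, for all $2\le k\le N(n)-2$, $$\kappa_k\in\{1,-1,2,-2,\tfrac12,-\tfrac12,3,\tfrac13\},\qquad \bar\kappa_k=0.$$
   Context: The Hilbert curve at step $n$ is the polygon $H_n$ in the unit square defined recursively: $H_1$ has vertices $(\tfrac14,\tfrac14),(\tfrac14,\tfrac34),(\tfrac34,\tfrac34),(\tfrac34,\tfrac14)$; $H_{n+1}$ is the concatenation (in this order, joined by the connecting edges) of $f_1(H_n),f_2(H_n),f_3(H_n),f_4(H_n)$, where $f_1(x,y)=(\tfrac y2,\tfrac x2)$, $f_2(x,y)=(\tfrac x2,\tfrac y2+\tfrac12)$, $f_3(x,y)=(\tfrac x2+\tfrac12,\tfrac y2+\tfrac12)$, $f_4(x,y)=(1-\tfrac y2,\tfrac12-\tfrac x2)$, each copy traversed in the order inherited from $H_n$. The inflection points $r_1,\dots,r_{N(n)}$ of $H_n$ are the vertices of $H_n$, in order, after deleting every interior vertex whose two neighbouring vertices are collinear with it (endpoints kept). Affine curvatures: $t_k=r_{k+1}-r_k$, $[a,b]=a_1b_2-a_2b_1$, and for $2\le k\le N-2$ with $[t_{k-1},t_k]\ne0$, $\kappa_k=\dfrac{[t_k,t_{k+1}]}{[t_{k-1},t_k]}$, $\bar\kappa_k=\dfrac{[t_{k-1},t_{k+1}]}{[t_{k-1},t_k]}$. *)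

theory Defs
  imports Complex_Main
begin

type_synonym pt = "real \<times> real"

definition f1 :: "pt \<Rightarrow> pt" where "f1 p = (snd p / 2, fst p / 2)"
definition f2 :: "pt \<Rightarrow> pt" where "f2 p = (fst p / 2, snd p / 2 + 1/2)"
definition f3 :: "pt \<Rightarrow> pt" where "f3 p = (fst p / 2 + 1/2, snd p / 2 + 1/2)"
definition f4 :: "pt \<Rightarrow> pt" where "f4 p = (1 - snd p / 2, 1/2 - fst p / 2)"

definition H1 :: "pt list" where
  "H1 = [(1/4, 1/4), (1/4, 3/4), (3/4, 3/4), (3/4, 1/4)]"

definition hstep :: "pt list \<Rightarrow> pt list" where
  "hstep vs = map f1 vs @ map f2 vs @ map f3 vs @ map f4 vs"

text \<open>Vertex list of the Hilbert polygon H_n (meaningful for n >= 1).\<close>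
definition hilbert :: "nat \<Rightarrow> pt list" where
  "hilbert n = (hstep ^^ (n - 1)) H1"

definition psub :: "pt \<Rightarrow> pt \<Rightarrow> pt" where
  "psub a b = (fst a - fst b, snd a - snd b)"

definition cross :: "pt \<Rightarrow> pt \<Rightarrow> real" where
  "cross a b = fst a * snd b - snd a * fst b"

definition collinear3 :: "pt \<Rightarrow> pt \<Rightarrow> pt \<Rightarrow> bool" where
  "collinear3 a b c \<longleftrightarrow> cross (psub b a) (psub c a) = 0"

definition inflection_pts :: "pt list \<Rightarrow> pt list" where
  "inflection_pts vs = [vs ! i. i \<leftarrow> [0..<length vs],
      i = 0 \<or> i = length vs - 1 \<or> \<not> collinear3 (vs ! (i - 1)) (vs ! i) (vs ! (i + 1))]"

definition Ninf :: "nat \<Rightarrow> nat" where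
  "Ninf n = length (inflection_pts (hilbert n))"

definition rpt :: "nat \<Rightarrow> nat \<Rightarrow> pt" where
  "rpt n k = inflection_pts (hilbert n) ! (k - 1)"

definition tvec :: "nat \<Rightarrow> nat \<Rightarrow> pt" where
  "tvec n k = psub (rpt n (k + 1)) (rpt n k)"

definition kappa :: "nat \<Rightarrow> nat \<Rightarrow> real" where
  "kappa n k = cross (tvec n k) (tvec n (k + 1)) / cross (tvec n (k - 1)) (tvec n k)"

definition kappa_bar :: "nat \<Rightarrow> nat \<Rightarrow> real" where
  "kappa_bar n k = cross (tvec n (k - 1)) (tvec n (k + 1)) / cross (tvec n (k - 1)) (tvec n k)"

end

theory Submission
  imports Defs
begin

text \<open>
  The affine curvatures and the collinearity test are ratios of cross products of difference
  vectors, so they are invariant under every affine map of nonzero determinant, such as the four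
  maps \<open>f\<^sub>i\<close>. Hence every window of four consecutive inflection points of \<open>H\<^sub>n\<^sub>+\<^sub>1\<close> lying
  inside one copy \<open>f\<^sub>i(H\<^sub>n)\<close> inherits the property from \<open>H\<^sub>n\<close>, and only the windows straddling
  the three junctions between copies are new. These depend only on the first and last two
  vertices and the first and last three inflection points of \<open>H\<^sub>n\<close>; near the corners \<open>(0,0)\<close>
  and \<open>(1,0)\<close> they are fixed shapes scaled by \<open>2\<^sup>-\<^sup>n\<close> which alternate with the parity of
  \<open>n\<close>. So finitely many junction windows, checked for both parities, carry an induction
  starting at \<open>H\<^sub>2\<close>.
\<close>

fun turning_vertices :: "pt list \<Rightarrow> pt list" where
  "turning_vertices (a # b # c # r) =
     (if collinear3 a b c then [] else [b]) @ turning_vertices (b # c # r)"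
| "turning_vertices _ = []"

lemma turning_vertices_conv_nth:
  "[vs ! i. i \<leftarrow> [1..<length vs - 1], \<not> collinear3 (vs ! (i - 1)) (vs ! i) (vs ! (i + 1))]
   = turning_vertices vs"
proof (induction vs rule: turning_vertices.induct)
  case (1 a b c r)
  let ?P = "\<lambda>vs i. \<not> collinear3 (vs ! (i - 1)) (vs ! i) (vs ! (i + 1))"
  have idx: "[1..<length (a # b # c # r) - 1] = 1 # map Suc [1..<length (b # c # r) - 1]"
    by (cases r)
      (auto simp: map_Suc_upt upt_conv_Cons Suc_le_eq, metis Suc_lessI length_greater_0_conv)
  have "[(a # b # c # r) ! i. i \<leftarrow> map Suc [1..<length (b # c # r) - 1], ?P (a # b # c # r) i]
      = [(b # c # r) ! i. i \<leftarrow> [1..<length (b # c # r) - 1], ?P (b # c # r) i]"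
    unfolding map_map
  proof (intro arg_cong[where f = concat] map_cong refl)
    fix i assume "i \<in> set [1..<length (b # c # r) - 1]"
    then have "i \<noteq> 0" by auto
    then obtain j where "i = Suc j" using not0_implies_Suc by blast
    then show "((\<lambda>i. if ?P (a # b # c # r) i then [(a # b # c # r) ! i] else []) \<circ> Suc) i
             = (if ?P (b # c # r) i then [(b # c # r) ! i] else [])"
      by simp
  qed
  then show ?case using "1.IH" idx by simp
qed auto

lemma inflection_pts_eq:
  assumes "length vs \<ge> 2"
  shows "inflection_pts vs = hd vs # turning_vertices vs @ [last vs]"
proof -
  have idx: "[0..<length vs] = 0 # [1..<length vs - 1] @ [length vs - 1]"
    using assms by (metis One_nat_def Suc_le_eq le_add_diff_inverse2 less_imp_le_nat nat_le_linear
        not_less_eq_eq numeral_2_eq_2 upt_Suc_append upt_conv_Cons zero_less_Suc diff_Suc_1 add.commute)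
  have "[vs ! i. i \<leftarrow> [1..<length vs - 1],
           i = 0 \<or> i = length vs - 1 \<or> \<not> collinear3 (vs ! (i - 1)) (vs ! i) (vs ! (i + 1))]
      = [vs ! i. i \<leftarrow> [1..<length vs - 1], \<not> collinear3 (vs ! (i - 1)) (vs ! i) (vs ! (i + 1))]"
    by (auto intro!: arg_cong[where f = concat] map_cong)
  moreover have "vs \<noteq> []" using assms by auto
  ultimately show ?thesis
    using turning_vertices_conv_nth[of vs]
    by (simp add: inflection_pts_def idx hd_conv_nth last_conv_nth)
qed

definition junction_turns :: "pt \<Rightarrow> pt \<Rightarrow> pt \<Rightarrow> pt \<Rightarrow> pt list" where
  "junction_turns a b x y =
     (if collinear3 a b x then [] else [b]) @ (if collinear3 b x y then [] else [x])"

lemma turning_vertices_Cons_Cons: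
  "xs \<noteq> [] \<Longrightarrow> turning_vertices (c # d # xs)
     = (if collinear3 c d (hd xs) then [] else [d]) @ turning_vertices (d # xs)"
  by (cases xs) auto

lemma turning_vertices_append_Cons:
  "turning_vertices (A @ a # b # x # y # B)
   = turning_vertices (A @ [a, b]) @ junction_turns a b x y @ turning_vertices (x # y # B)"
proof (induction A arbitrary: a b)
  case Nil
  then show ?case by (simp add: junction_turns_def)
next
  case (Cons c A)
  show ?case
  proof (cases A)
    case Nil
    then show ?thesis using Cons.IH[of a b] by simp
  next
    case (Cons d A')
    then show ?thesis
      using Cons.IH[of a b] by (cases A') (simp_all add: turning_vertices_Cons_Cons)
  qed
qed

lemma turning_vertices_append:
  assumes "length A \<ge> 2" and "length B \<ge> 2"
  shows "turning_vertices (A @ B) = turning_vertices A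
           @ junction_turns (A ! (length A - 2)) (last A) (hd B) (B ! 1) @ turning_vertices B"
proof -
  obtain A0 p q where A: "A = A0 @ [p, q]"
  proof -
    obtain q p A0 where "rev A = q # p # A0"
      using assms(1) by (metis Suc_le_length_iff numeral_2_eq_2 length_rev)
    then show thesis using that[of "rev A0" p q] by (simp add: rev_swap)
  qed
  obtain x y B0 where B: "B = x # y # B0"
    using assms(2) by (metis Suc_le_length_iff numeral_2_eq_2)
  show ?thesis
    using turning_vertices_append_Cons[of A0 p q x y B0] by (simp add: A B nth_append)
qed

definition area_scaling :: "(pt \<Rightarrow> pt) \<Rightarrow> bool" where
  "area_scaling f \<longleftrightarrow> (\<exists>d. d \<noteq> 0 \<and> (\<forall>a b c e.
     cross (psub (f a) (f b)) (psub (f c) (f e)) = d * cross (psub a b) (psub c e)))"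

lemma area_scalingE:
  assumes "area_scaling f"
  obtains d where "d \<noteq> 0"
    "\<And>a b c e. cross (psub (f a) (f b)) (psub (f c) (f e)) = d * cross (psub a b) (psub c e)"
  using assms unfolding area_scaling_def by blast

lemma area_scaling_collinear3_iff:
  "area_scaling f \<Longrightarrow> collinear3 (f a) (f b) (f c) \<longleftrightarrow> collinear3 a b c"
  by (erule area_scalingE) (simp add: collinear3_def)

definition curvatures_admissible :: "pt \<Rightarrow> pt \<Rightarrow> pt \<Rightarrow> pt \<Rightarrow> bool" where
  "curvatures_admissible a b c d \<longleftrightarrow> cross (psub b a) (psub c b) \<noteq> 0
     \<and> cross (psub c b) (psub d c) / cross (psub b a) (psub c b) \<in> {1, -1, 2, -2, 1/2, -1/2, 3, 1/3}
     \<and> cross (psub b a) (psub d c) / cross (psub b a) (psub c b) = 0"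

lemma area_scaling_curvatures_admissible_iff:
  "area_scaling f \<Longrightarrow>
     curvatures_admissible (f a) (f b) (f c) (f d) \<longleftrightarrow> curvatures_admissible a b c d"
  by (erule area_scalingE) (simp add: curvatures_admissible_def)

definition scaled_at :: "pt \<Rightarrow> real \<Rightarrow> pt \<Rightarrow> pt" where
  "scaled_at c h p = (fst c + h * fst p, snd c + h * snd p)"

lemma area_scaling_scaled_at: "h \<noteq> 0 \<Longrightarrow> area_scaling (scaled_at c h)"
  unfolding area_scaling_def scaled_at_def cross_def psub_def
  by (rule exI[of _ "h * h"]) (auto simp: algebra_simps)

lemma area_scaling_f1: "area_scaling f1"
  unfolding area_scaling_def f1_def cross_def psub_def
  by (rule exI[of _ "-1/4"]) (auto simp: algebra_simps)

lemma area_scaling_f2: "area_scaling f2"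
  unfolding area_scaling_def f2_def cross_def psub_def
  by (rule exI[of _ "1/4"]) (auto simp: algebra_simps)

lemma area_scaling_f3: "area_scaling f3"
  unfolding area_scaling_def f3_def cross_def psub_def
  by (rule exI[of _ "1/4"]) (auto simp: algebra_simps)

lemma area_scaling_f4: "area_scaling f4"
  unfolding area_scaling_def f4_def cross_def psub_def
  by (rule exI[of _ "-1/4"]) (auto simp: algebra_simps)

lemma turning_vertices_map:
  "area_scaling f \<Longrightarrow> turning_vertices (map f vs) = map f (turning_vertices vs)"
  by (induction vs rule: turning_vertices.induct) (auto simp: area_scaling_collinear3_iff)

lemma junction_turns_map:
  "area_scaling f \<Longrightarrow> junction_turns (f a) (f b) (f x) (f y) = map f (junction_turns a b x y)"
  by (simp add: junction_turns_def area_scaling_collinear3_iff)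

fun windows_admissible :: "pt list \<Rightarrow> bool" where
  "windows_admissible (a # b # c # d # r) =
     (curvatures_admissible a b c d \<and> windows_admissible (b # c # d # r))"
| "windows_admissible _ = True"

lemma windows_admissible_appendD1: "windows_admissible (xs @ ys) \<Longrightarrow> windows_admissible xs"
  by (induction xs rule: windows_admissible.induct) auto

lemma windows_admissible_ConsD: "windows_admissible (x # xs) \<Longrightarrow> windows_admissible xs"
  by (cases xs rule: windows_admissible.cases) auto

lemma windows_admissible_map:
  "area_scaling f \<Longrightarrow> windows_admissible xs \<Longrightarrow> windows_admissible (map f xs)"
  by (induction xs rule: windows_admissible.induct)
    (auto simp: area_scaling_curvatures_admissible_iff)

lemma windows_admissible_join:
  assumes "length L = 3" and "windows_admissible (X @ L)" and "windows_admissible (L @ R)"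
  shows "windows_admissible (X @ L @ R)"
  using assms(2)
proof (induction X)
  case (Cons x X)
  have "length (X @ L) \<ge> 3" using assms(1) by simp
  then obtain b c d r where e: "X @ L = b # c # d # r"
    by (metis One_nat_def Suc_le_length_iff numeral_3_eq_3)
  have "windows_admissible (X @ L @ R)"
    using Cons windows_admissible_ConsD by auto
  with Cons.prems e show ?case by (metis windows_admissible.simps(1) append_Cons append_assoc)
qed (use assms(3) in simp)

lemma windows_admissible_nth:
  "windows_admissible xs \<Longrightarrow> i + 3 < length xs \<Longrightarrow>
     curvatures_admissible (xs ! i) (xs ! (i + 1)) (xs ! (i + 2)) (xs ! (i + 3))"
proof (induction xs arbitrary: i rule: windows_admissible.induct)
  case (1 a b c d r)
  then show ?case by (cases i) (auto simp: nth_Cons')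
qed auto

lemma windows_admissible_bridge:
  assumes "length L = 3" and "length F = 3" and "windows_admissible (X @ L)"
    and "windows_admissible (L @ J @ F)" and "windows_admissible (F @ Y)"
  shows "windows_admissible (X @ L @ J @ F @ Y)"
  using assms windows_admissible_join[of F "L @ J" Y] windows_admissible_join[of L X "J @ F @ Y"]
  by simp

lemma windows_admissible_copies:
  assumes W: "windows_admissible (p # G @ [q])"
    and G: "G = Gs @ M @ Ge" "length Gs = 3" "length Ge = 3"
    and J1: "windows_admissible (map f1 Ge @ J1 @ map f2 Gs)"
    and J2: "windows_admissible (map f2 Ge @ J2 @ map f3 Gs)"
    and J3: "windows_admissible (map f3 Ge @ J3 @ map f4 Gs)"
  shows "windows_admissible
           (map f1 (p # G) @ J1 @ map f2 G @ J2 @ map f3 G @ J3 @ map f4 (G @ [q]))"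
proof -
  have W1: "windows_admissible (p # G)"
    using W windows_admissible_appendD1[of "p # G" "[q]"] by simp
  have W2: "windows_admissible G" using W1 windows_admissible_ConsD by blast
  have W3: "windows_admissible (G @ [q])" using W windows_admissible_ConsD by simp
  note bridge = windows_admissible_bridge[OF length_map[of _ Ge, unfolded G(3)]
      length_map[of _ Gs, unfolded G(2)]]
  have P3: "windows_admissible (map f3 G @ J3 @ map f4 (G @ [q]))"
    using bridge[OF _ J3, of "map f3 (Gs @ M)" "map f4 (M @ Ge @ [q])"]
      windows_admissible_map[OF area_scaling_f3 W2] windows_admissible_map[OF area_scaling_f4 W3]
    by (simp add: G)
  have P2: "windows_admissible (map f2 G @ J2 @ map f3 G @ J3 @ map f4 (G @ [q]))"
    using bridge[OF _ J2, of "map f2 (Gs @ M)" "map f3 (M @ Ge) @ J3 @ map f4 (G @ [q])"]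
      windows_admissible_map[OF area_scaling_f2 W2] P3
    by (simp add: G)
  show ?thesis
    using bridge[OF _ J1, of "map f1 (p # Gs @ M)"
        "map f2 (M @ Ge) @ J2 @ map f3 G @ J3 @ map f4 (G @ [q])"]
      windows_admissible_map[OF area_scaling_f1 W1] P2
    by (simp add: G)
qed

lemma turning_vertices_hstep:
  assumes "length H \<ge> 2"
  defines "G \<equiv> turning_vertices H" and "i \<equiv> length H - 2"
  shows "turning_vertices (hstep H) =
    map f1 G @ junction_turns (f1 (H ! i)) (f1 (last H)) (f2 (hd H)) (f2 (H ! 1)) @
    map f2 G @ junction_turns (f2 (H ! i)) (f2 (last H)) (f3 (hd H)) (f3 (H ! 1)) @
    map f3 G @ junction_turns (f3 (H ! i)) (f3 (last H)) (f4 (hd H)) (f4 (H ! 1)) @ map f4 G"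
proof -
  have "H \<noteq> []" using assms(1) by auto
  note tv = turning_vertices_append turning_vertices_map area_scaling_f1 area_scaling_f2
    area_scaling_f3 area_scaling_f4
  have "turning_vertices (map f3 H @ map f4 H) =
      map f3 G @ junction_turns (f3 (H ! i)) (f3 (last H)) (f4 (hd H)) (f4 (H ! 1)) @ map f4 G"
    using assms \<open>H \<noteq> []\<close> by (subst tv) (simp_all add: tv last_map hd_map)
  moreover have "turning_vertices (map f2 H @ map f3 H @ map f4 H) =
      map f2 G @ junction_turns (f2 (H ! i)) (f2 (last H)) (f3 (hd H)) (f3 (H ! 1))
      @ turning_vertices (map f3 H @ map f4 H)"
    using assms \<open>H \<noteq> []\<close> by (subst tv) (simp_all add: tv last_map hd_map nth_append)
  moreover have "turning_vertices (map f1 H @ map f2 H @ map f3 H @ map f4 H) =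
      map f1 G @ junction_turns (f1 (H ! i)) (f1 (last H)) (f2 (hd H)) (f2 (H ! 1))
      @ turning_vertices (map f2 H @ map f3 H @ map f4 H)"
    using assms \<open>H \<noteq> []\<close> by (subst tv) (simp_all add: tv last_map hd_map nth_append)
  ultimately show ?thesis unfolding hstep_def by simp
qed

definition swap_pt :: "pt \<Rightarrow> pt" where "swap_pt p = (snd p, fst p)"
definition neg_swap_pt :: "pt \<Rightarrow> pt" where "neg_swap_pt p = (- snd p, - fst p)"

lemma f_scaled_at_corners:
  "f1 (scaled_at (0, 0) h p) = scaled_at (0, 0) (h/2) (swap_pt p)"
  "f1 (scaled_at (1, 0) h p) = scaled_at (0, 1/2) (h/2) (swap_pt p)"
  "f2 (scaled_at (0, 0) h p) = scaled_at (0, 1/2) (h/2) p"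
  "f2 (scaled_at (1, 0) h p) = scaled_at (1/2, 1/2) (h/2) p"
  "f3 (scaled_at (0, 0) h p) = scaled_at (1/2, 1/2) (h/2) p"
  "f3 (scaled_at (1, 0) h p) = scaled_at (1, 1/2) (h/2) p"
  "f4 (scaled_at (0, 0) h p) = scaled_at (1, 1/2) (h/2) (neg_swap_pt p)"
  "f4 (scaled_at (1, 0) h p) = scaled_at (1, 0) (h/2) (neg_swap_pt p)"
  by (simp_all add: f1_def f2_def f3_def f4_def scaled_at_def swap_pt_def neg_swap_pt_def
      field_simps)

lemma turning_vertices_hstep_corners:
  assumes H: "H = map (scaled_at (0, 0) h) [v1, v2] @ M @ map (scaled_at (1, 0) h) [w1, w2]"
    and "h \<noteq> 0"
  defines "G \<equiv> turning_vertices H"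
  shows "turning_vertices (hstep H) =
    map f1 G @ map (scaled_at (0, 1/2) (h/2)) (junction_turns (swap_pt w1) (swap_pt w2) v1 v2) @
    map f2 G @ map (scaled_at (1/2, 1/2) (h/2)) (junction_turns w1 w2 v1 v2) @
    map f3 G @ map (scaled_at (1, 1/2) (h/2))
                 (junction_turns w1 w2 (neg_swap_pt v1) (neg_swap_pt v2)) @ map f4 G"
proof -
  have "length H \<ge> 2" using H by simp
  moreover have "h / 2 \<noteq> 0" using assms(2) by simp
  ultimately show ?thesis
    using turning_vertices_hstep
    by (simp add: H G_def nth_append f_scaled_at_corners
        junction_turns_map[OF area_scaling_scaled_at])
qed

text \<open>
  \<open>H\<close> starts at the corner \<open>(0,0)\<close> and ends at \<open>(1,0)\<close>; in units of \<open>h\<close> there, \<open>V\<close> and \<open>W\<close> are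
  the shapes of its first and last two vertices and \<open>A\<close> and \<open>B\<close> those of its first and last
  three turning vertices.
\<close>

definition hilbert_inv ::
    "pt list \<Rightarrow> real \<Rightarrow> pt list \<Rightarrow> pt list \<Rightarrow> pt list \<Rightarrow> pt list \<Rightarrow> bool" where
  "hilbert_inv H h V W A B \<longleftrightarrow>
     h > 0 \<and> length V = 2 \<and> length W = 2 \<and> length A = 3 \<and> length B = 3
     \<and> (\<exists>M. H = map (scaled_at (0, 0) h) V @ M @ map (scaled_at (1, 0) h) W)
     \<and> (\<exists>M. turning_vertices H = map (scaled_at (0, 0) h) A @ M @ map (scaled_at (1, 0) h) B)
     \<and> windows_admissible
         (scaled_at (0, 0) h (hd V) # turning_vertices H @ [scaled_at (1, 0) h (last W)])"

text \<open>
  The three junctions of \<open>hstep H\<close> lie at \<open>(0,1/2)\<close>, \<open>(1/2,1/2)\<close> and \<open>(1,1/2)\<close>; each is the image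
  under \<open>scaled_at c (h/2)\<close> of a junction of the normalized shapes, which is what \<open>J1\<close>--\<open>J3\<close>
  are about.
\<close>

lemma hilbert_inv_hstep:
  assumes inv: "hilbert_inv H h [v1, v2] [w1, w2] [a1, a2, a3] [b1, b2, b3]"
    and J1: "windows_admissible (map swap_pt [b1, b2, b3]
               @ junction_turns (swap_pt w1) (swap_pt w2) v1 v2 @ [a1, a2, a3])"
    and J2: "windows_admissible ([b1, b2, b3] @ junction_turns w1 w2 v1 v2 @ [a1, a2, a3])"
    and J3: "windows_admissible ([b1, b2, b3]
               @ junction_turns w1 w2 (neg_swap_pt v1) (neg_swap_pt v2)
               @ map neg_swap_pt [a1, a2, a3])"
  shows "hilbert_inv (hstep H) (h/2) (map swap_pt [v1, v2]) (map neg_swap_pt [w1, w2])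
           (map swap_pt [a1, a2, a3]) (map neg_swap_pt [b1, b2, b3])"
proof -
  define G Gs Ge where "G = turning_vertices H"
    and "Gs = map (scaled_at (0, 0) h) [a1, a2, a3]"
    and "Ge = map (scaled_at (1, 0) h) [b1, b2, b3]"
  obtain M where
    H: "H = map (scaled_at (0, 0) h) [v1, v2] @ M @ map (scaled_at (1, 0) h) [w1, w2]"
    using inv unfolding hilbert_inv_def by blast
  obtain MG where G: "G = Gs @ MG @ Ge"
    using inv unfolding hilbert_inv_def G_def Gs_def Ge_def by blast
  have "h / 2 \<noteq> 0" using inv unfolding hilbert_inv_def by simp
  note scaled = area_scaling_scaled_at[OF this]
  define J1' J2' J3' where
    "J1' = map (scaled_at (0, 1/2) (h/2)) (junction_turns (swap_pt w1) (swap_pt w2) v1 v2)"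
    and "J2' = map (scaled_at (1/2, 1/2) (h/2)) (junction_turns w1 w2 v1 v2)"
    and "J3' = map (scaled_at (1, 1/2) (h/2))
                 (junction_turns w1 w2 (neg_swap_pt v1) (neg_swap_pt v2))"
  have tv_hstep: "turning_vertices (hstep H) =
      map f1 G @ J1' @ map f2 G @ J2' @ map f3 G @ J3' @ map f4 G"
    unfolding J1'_def J2'_def J3'_def G_def
    using turning_vertices_hstep_corners[OF H] inv by (simp add: hilbert_inv_def)
  have "windows_admissible (map f1 (scaled_at (0, 0) h v1 # G) @ J1' @ map f2 G @ J2'
          @ map f3 G @ J3' @ map f4 (G @ [scaled_at (1, 0) h w2]))"
  proof (rule windows_admissible_copies[OF _ G])
    show "windows_admissible (scaled_at (0, 0) h v1 # G @ [scaled_at (1, 0) h w2])"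
      using inv unfolding hilbert_inv_def G_def by simp
    show "windows_admissible (map f1 Ge @ J1' @ map f2 Gs)"
      using windows_admissible_map[OF scaled J1]
      by (simp add: Gs_def Ge_def J1'_def f_scaled_at_corners)
    show "windows_admissible (map f2 Ge @ J2' @ map f3 Gs)"
      using windows_admissible_map[OF scaled J2]
      by (simp add: Gs_def Ge_def J2'_def f_scaled_at_corners)
    show "windows_admissible (map f3 Ge @ J3' @ map f4 Gs)"
      using windows_admissible_map[OF scaled J3]
      by (simp add: Gs_def Ge_def J3'_def f_scaled_at_corners)
  qed (simp_all add: Gs_def Ge_def)
  then have "windows_admissible (scaled_at (0, 0) (h/2) (swap_pt v1) # turning_vertices (hstep H)
          @ [scaled_at (1, 0) (h/2) (neg_swap_pt w2)])"
    by (simp add: tv_hstep f_scaled_at_corners)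
  moreover have "\<exists>M'. hstep H = map (scaled_at (0, 0) (h/2)) (map swap_pt [v1, v2]) @ M'
      @ map (scaled_at (1, 0) (h/2)) (map neg_swap_pt [w1, w2])"
    by (rule exI[of _ "map f1 M @ map f1 (map (scaled_at (1, 0) h) [w1, w2]) @ map f2 H
         @ map f3 H @ map f4 (map (scaled_at (0, 0) h) [v1, v2]) @ map f4 M"])
      (simp add: hstep_def H f_scaled_at_corners)
  moreover have "\<exists>M'. turning_vertices (hstep H)
      = map (scaled_at (0, 0) (h/2)) (map swap_pt [a1, a2, a3]) @ M'
        @ map (scaled_at (1, 0) (h/2)) (map neg_swap_pt [b1, b2, b3])"
    unfolding tv_hstep G Gs_def Ge_def by (simp add: f_scaled_at_corners)
  ultimately show ?thesis using inv unfolding hilbert_inv_def by simp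
qed

definition start_vertices :: "bool \<Rightarrow> pt list" where
  "start_vertices even_n = (if even_n then [(1/2, 1/2), (3/2, 1/2)] else [(1/2, 1/2), (1/2, 3/2)])"

definition end_vertices :: "bool \<Rightarrow> pt list" where
  "end_vertices even_n = (if even_n then [(-3/2, 1/2), (-1/2, 1/2)] else [(-1/2, 3/2), (-1/2, 1/2)])"

definition start_turns :: "bool \<Rightarrow> pt list" where
  "start_turns even_n = (if even_n then [(3/2, 1/2), (3/2, 3/2), (1/2, 3/2)]
                         else [(1/2, 3/2), (3/2, 3/2), (3/2, 1/2)])"

definition end_turns :: "bool \<Rightarrow> pt list" where
  "end_turns even_n = (if even_n then [(-1/2, 3/2), (-3/2, 3/2), (-3/2, 1/2)]
                       else [(-3/2, 1/2), (-3/2, 3/2), (-1/2, 3/2)])"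

lemmas corner_shape_defs = start_vertices_def end_vertices_def start_turns_def end_turns_def

lemma hilbert_inv_corner_shapes_hstep:
  assumes "hilbert_inv H h (start_vertices b) (end_vertices b) (start_turns b) (end_turns b)"
  shows "hilbert_inv (hstep H) (h/2) (start_vertices (\<not> b)) (end_vertices (\<not> b))
           (start_turns (\<not> b)) (end_turns (\<not> b))"
proof (cases b)
  case True
  then have "hilbert_inv H h [(1/2, 1/2), (3/2, 1/2)] [(-3/2, 1/2), (-1/2, 1/2)]
      [(3/2, 1/2), (3/2, 3/2), (1/2, 3/2)] [(-1/2, 3/2), (-3/2, 3/2), (-3/2, 1/2)]"
    using assms by (simp add: corner_shape_defs)
  from hilbert_inv_hstep[OF this] show ?thesis
    using True by (simp add: corner_shape_defs junction_turns_def collinear3_def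
        curvatures_admissible_def cross_def psub_def swap_pt_def neg_swap_pt_def)
next
  case False
  then have "hilbert_inv H h [(1/2, 1/2), (1/2, 3/2)] [(-1/2, 3/2), (-1/2, 1/2)]
      [(1/2, 3/2), (3/2, 3/2), (3/2, 1/2)] [(-3/2, 1/2), (-3/2, 3/2), (-1/2, 3/2)]"
    using assms by (simp add: corner_shape_defs)
  from hilbert_inv_hstep[OF this] show ?thesis
    using False by (simp add: corner_shape_defs junction_turns_def collinear3_def
        curvatures_admissible_def cross_def psub_def swap_pt_def neg_swap_pt_def)
qed

lemma hilbert_2:
  "hilbert 2 = [(1/8, 1/8), (3/8, 1/8), (3/8, 3/8), (1/8, 3/8), (1/8, 5/8), (1/8, 7/8),
     (3/8, 7/8), (3/8, 5/8), (5/8, 5/8), (5/8, 7/8), (7/8, 7/8), (7/8, 5/8), (7/8, 3/8),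
     (5/8, 3/8), (5/8, 1/8), (7/8, 1/8)]"
  by (simp add: hilbert_def hstep_def H1_def f1_def f2_def f3_def f4_def)

lemma turning_vertices_hilbert_2:
  "turning_vertices (hilbert 2) = [(3/8, 1/8), (3/8, 3/8), (1/8, 3/8), (1/8, 7/8), (3/8, 7/8),
     (3/8, 5/8), (5/8, 5/8), (5/8, 7/8), (7/8, 7/8), (7/8, 3/8), (5/8, 3/8), (5/8, 1/8)]"
  by (simp add: hilbert_2 collinear3_def cross_def psub_def)

lemma hilbert_inv_2:
  "hilbert_inv (hilbert 2) ((1/2)^2) (start_vertices True) (end_vertices True)
     (start_turns True) (end_turns True)"
proof -
  have "hilbert 2 = map (scaled_at (0, 0) ((1/2)^2)) (start_vertices True)
      @ [(3/8, 3/8), (1/8, 3/8), (1/8, 5/8), (1/8, 7/8), (3/8, 7/8), (3/8, 5/8), (5/8, 5/8),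
         (5/8, 7/8), (7/8, 7/8), (7/8, 5/8), (7/8, 3/8), (5/8, 3/8)]
      @ map (scaled_at (1, 0) ((1/2)^2)) (end_vertices True)"
    by (simp add: hilbert_2 scaled_at_def corner_shape_defs power2_eq_square)
  moreover have "turning_vertices (hilbert 2) = map (scaled_at (0, 0) ((1/2)^2)) (start_turns True)
      @ [(1/8, 7/8), (3/8, 7/8), (3/8, 5/8), (5/8, 5/8), (5/8, 7/8), (7/8, 7/8)]
      @ map (scaled_at (1, 0) ((1/2)^2)) (end_turns True)"
    by (simp add: turning_vertices_hilbert_2 scaled_at_def corner_shape_defs power2_eq_square)
  moreover have "windows_admissible (scaled_at (0, 0) ((1/2)^2) (hd (start_vertices True))
      # turning_vertices (hilbert 2) @ [scaled_at (1, 0) ((1/2)^2) (last (end_vertices True))])"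
    by (simp add: turning_vertices_hilbert_2 scaled_at_def corner_shape_defs power2_eq_square
        curvatures_admissible_def cross_def psub_def)
  ultimately show ?thesis unfolding hilbert_inv_def by (auto simp: corner_shape_defs)
qed

lemma hilbert_Suc: "n \<ge> 1 \<Longrightarrow> hilbert (Suc n) = hstep (hilbert n)"
  unfolding hilbert_def by (cases n) auto

lemma hilbert_inv_hilbert:
  "n \<ge> 2 \<Longrightarrow> hilbert_inv (hilbert n) ((1/2)^n) (start_vertices (even n)) (end_vertices (even n))
     (start_turns (even n)) (end_turns (even n))"
proof (induction n rule: nat_induct_at_least)
  case base
  show ?case using hilbert_inv_2 by simp
next
  case (Suc n)
  then show ?case using hilbert_inv_corner_shapes_hstep[OF Suc.IH] by (simp add: hilbert_Suc)
qed

lemma windows_admissible_inflection_pts: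
  assumes "n \<ge> 1"
  shows "windows_admissible (inflection_pts (hilbert n))"
proof (cases "n = 1")
  case True
  then show ?thesis
    by (simp add: inflection_pts_eq hilbert_def H1_def collinear3_def cross_def psub_def
        curvatures_admissible_def)
next
  case False
  with assms have "hilbert_inv (hilbert n) ((1/2)^n) (start_vertices (even n))
      (end_vertices (even n)) (start_turns (even n)) (end_turns (even n))"
    by (intro hilbert_inv_hilbert) simp
  then obtain h V W M
    where H: "hilbert n = map (scaled_at (0, 0) h) V @ M @ map (scaled_at (1, 0) h) W"
    and "length V = 2" "length W = 2"
    and "windows_admissible (scaled_at (0, 0) h (hd V) # turning_vertices (hilbert n)
           @ [scaled_at (1, 0) h (last W)])"
    unfolding hilbert_inv_def by blast
  moreover from calculation have "hd (hilbert n) = scaled_at (0, 0) h (hd V)"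
    and "last (hilbert n) = scaled_at (1, 0) h (last W)"
    by (cases V; simp; cases W rule: rev_cases; simp)+
  ultimately show ?thesis by (simp add: inflection_pts_eq)
qed

theorem mainTheorem11:
  fixes n k :: nat
  assumes "1 \<le> n" and "2 \<le> k" and "k \<le> Ninf n - 2"
  shows "cross (tvec n (k - 1)) (tvec n k) \<noteq> 0
         \<and> kappa n k \<in> {1, -1, 2, -2, 1/2, -1/2, 3, 1/3}
         \<and> kappa_bar n k = 0"
proof -
  define r where "r = inflection_pts (hilbert n)"
  obtain j where k: "k = j + 2" using assms(2) by (metis le_add_diff_inverse2)
  have "j + 3 < length r" using assms unfolding Ninf_def r_def k by linarith
  with windows_admissible_inflection_pts[OF assms(1)]
  have adm: "curvatures_admissible (r ! j) (r ! (j + 1)) (r ! (j + 2)) (r ! (j + 3))"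
    unfolding r_def by (rule windows_admissible_nth)
  have tv: "tvec n (k - 1) = psub (r ! (j + 1)) (r ! j)"
    "tvec n k = psub (r ! (j + 2)) (r ! (j + 1))"
    "tvec n (k + 1) = psub (r ! (j + 3)) (r ! (j + 2))"
    unfolding tvec_def rpt_def r_def k by (simp_all add: numeral_3_eq_3)
  show ?thesis
    using adm unfolding kappa_def kappa_bar_def tv curvatures_admissible_def by blast
qed

end
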